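(* Let $\alpha,\gamma\in\mathbb{C}$ and $\Delta\in\mathbb{C}^*$. Consider extensions of conformal $\mathrm{SV}$-modules $$0\to \mathbb{C}c_\gamma\to E\to V(\alpha,\Delta)\to 0,$$ realized as $E=\mathbb{C}c_\gamma\oplus\mathbb{C}[\partial]v_\Delta$ (as $\mathbb{C}[\partial]$-modules), with $\mathbb{C}c_\gamma$ an $\mathrm{SV}$-submodule and $$L_\lambda v_\Delta=(\partial+\alpha+\Delta\lambda)v_\Delta+f(\lambda)c_\gamma,\quad M_\lambda v_\Delta=g(\lambda)c_\gamma,\quad Y_\lambda v_\Delta=h(\lambda)c_\gamma,$$ for polynomials $f,g,h\in\mathbb{C}[\lambda]$. Nontrivial extensions of this form exist if and only if $\alpha+\gamma=0$ and $\Delta\in\{1,2,-\tfrac12\}$. In these cases they are given, up to equivalence, by: (i) $\Delta=1$: $g=h=0$, $f(\lambda)=a_2\lambda^2$ with $a_2\neq0$; (ii) $\Delta=2$: $g=h=0$, $f(\lambda)=a_3\lambda^3$ with $a_3\neq0$; (iii) $\Delta=-\tfrac12$: $f=g=0$, $h(\lambda)=b_0$ with $b_0\neq0$. In particular, $\mathrm{Ext}(V(\alpha,\Delta),\mathbb{C}c_{-\alpha})$ is $1$-dimensional in each of the cases (i)–(iii).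
   Context: A Lie conformal algebra is a $\mathbb{C}[\partial]$-module $R$ with a $\mathbb{C}$-bilinear $\lambda$-bracket $R\otimes R\to\mathbb{C}[\lambda]\otimes R$, $a\otimes b\mapsto[a_\lambda b]$, satisfying $[\partial a_\lambda b]=-\lambda[a_\lambda b]$, $[a_\lambda\partial b]=(\partial+\lambda)[a_\lambda b]$, $[a_\lambda b]=-[b_{-\lambda-\partial}a]$, and $[a_\lambda[b_\mu c]]=[[a_\lambda b]_{\lambda+\mu}c]+[b_\mu[a_\lambda c]]$. A conformal module over $R$ is a $\mathbb{C}[\partial]$-module $V$ with a linear map $a\mapsto a_\lambda\in\mathrm{End}_{\mathbb{C}}(V)\otimes\mathbb{C}[\lambda]$ such that $[a_\lambda,b_\mu]=[a_\lambda b]_{\lambda+\mu}$ and $(\partial a)_\lambda=[\partial,a_\lambda]=-\lambda a_\lambda$. The Schrödinger–Virasoro conformal algebra $\mathrm{SV}$ is the free $\mathbb{C}[\partial]$-module with basis $L,M,Y$ whose nonzero $\lambda$-brackets (up to skew-symmetry) are $[L_\lambda L]=(\partial+2\lambda)L$, $[L_\lambda Y]=(\partial+\tfrac32\lambda)Y$, $[L_\lambda M]=(\partial+\lambda)M$, $[Y_\lambda Y]=(\partial+2\lambda)M$. For $\alpha,\Delta\in\mathbb{C}$, $V(\alpha,\Delta)=\mathbb{C}[\partial]v_\Delta$ is the free rank-one module with $L_\lambda v_\Delta=(\partial+\alpha+\Delta\lambda)v_\Delta$, $M_\lambda v_\Delta=Y_\lambda v_\Delta=0$. For $\gamma\in\mathbb{C}$,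 $\mathbb{C}c_\gamma$ is the one-dimensional module with $\partial c_\gamma=\gamma c_\gamma$ and all $\lambda$-actions zero. An extension of $W$ by $V$ is an exact sequence of conformal modules $0\to V\to E\to W\to0$; two extensions are equivalent if there is a module homomorphism between the middle terms commuting with the identity maps on $V$ and $W$; an extension is trivial if equivalent to $V\oplus W$. $\mathrm{Ext}(W,V)$ denotes the vector space of extension cocycles modulo coboundaries (cocycles giving trivial extensions). *)

theory Defs
  imports "HOL-Computational_Algebra.Polynomial"
begin

datatype sv_gen = L | M | Y

definition sv_gens :: "sv_gen list" where
  "sv_gens = [L, M, Y]"

text \<open>An element of SV is p_L(d) L + p_M(d) M + p_Y(d) Y, represented by the
  coefficient function (generator to polynomial in d).  The formal variable
  lambda is treated as a complex number (polynomial identities in lambda, mu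
  over C are equivalent to identities of their values).\<close>
type_synonym sv_elem = "sv_gen \<Rightarrow> complex poly"

text \<open>The lambda-bracket of generators at lam, as an element of SV:
  coefficient of generator c in [a_lam b].  Brackets with the first argument
  M or Y and second L are obtained from skew-symmetry.\<close>
fun gen_bracket :: "sv_gen \<Rightarrow> sv_gen \<Rightarrow> complex \<Rightarrow> sv_gen \<Rightarrow> complex poly" where
  "gen_bracket L L lam c = (if c = L then [:2 * lam, 1:] else 0)"
| "gen_bracket L M lam c = (if c = M then [:lam, 1:] else 0)"
| "gen_bracket L Y lam c = (if c = Y then [:3/2 * lam, 1:] else 0)"
| "gen_bracket M L lam c = (if c = M then [:lam:] else 0)"
| "gen_bracket Y L lam c = (if c = Y then [:3/2 * lam, 1/2:] else 0)"
| "gen_bracket Y Y lam c = (if c = M then [:2 * lam, 1:] else 0)"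
| "gen_bracket _ _ lam c = 0"

text \<open>Sesquilinear extension:
  [x_lam y] = sum_{a,b} x_a(-lam) y_b(d+lam) [a_lam b].\<close>
definition sv_bracket :: "sv_elem \<Rightarrow> complex \<Rightarrow> sv_elem \<Rightarrow> sv_elem" where
  "sv_bracket x lam y = (\<lambda>c. sum_list (map (\<lambda>(a, b).
      smult (poly (x a) (- lam)) (pcompose (y b) [:lam, 1:] * gen_bracket a b lam c))
      (List.product sv_gens sv_gens)))"

text \<open>(z, p) stands for z c_gamma + p(d) v_Delta.\<close>
type_synonym E_elem = "complex \<times> complex poly"

definition addE :: "E_elem \<Rightarrow> E_elem \<Rightarrow> E_elem" where
  "addE e e' = (fst e + fst e', snd e + snd e')"

definition smulE :: "complex \<Rightarrow> E_elem \<Rightarrow> E_elem" where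
  "smulE s e = (s * fst e, smult s (snd e))"

definition subE :: "E_elem \<Rightarrow> E_elem \<Rightarrow> E_elem" where
  "subE e e' = (fst e - fst e', snd e - snd e')"

definition delE :: "complex \<Rightarrow> E_elem \<Rightarrow> E_elem" where
  "delE \<gamma> e = (\<gamma> * fst e, [:0, 1:] * snd e)"

text \<open>Given lambda-actions of the generators on E, the action of a general
  element x = sum_a p_a(d) a of SV: x_lam = sum_a p_a(-lam) a_lam
  (this is forced by (d a)_lam = - lam a_lam).\<close>
definition sv_act :: "(sv_gen \<Rightarrow> complex \<Rightarrow> E_elem \<Rightarrow> E_elem) \<Rightarrow> sv_elem \<Rightarrow> complex \<Rightarrow> E_elem \<Rightarrow> E_elem" where
  "sv_act act x lam e =
     addE (smulE (poly (x L) (- lam)) (act L lam e))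
      (addE (smulE (poly (x M) (- lam)) (act M lam e))
            (smulE (poly (x Y) (- lam)) (act Y lam e)))"

definition conformal_module :: "complex \<Rightarrow> (sv_gen \<Rightarrow> complex \<Rightarrow> E_elem \<Rightarrow> E_elem) \<Rightarrow> bool" where
  "conformal_module \<gamma> act \<longleftrightarrow>
     (\<forall>a lam e e'. act a lam (addE e e') = addE (act a lam e) (act a lam e')) \<and>
     (\<forall>a lam s e. act a lam (smulE s e) = smulE s (act a lam e)) \<and>
     (\<forall>x lam e. subE (delE \<gamma> (sv_act act x lam e)) (sv_act act x lam (delE \<gamma> e))
                  = smulE (- lam) (sv_act act x lam e)) \<and>
     (\<forall>x y lam mu e. subE (sv_act act x lam (sv_act act y mu e)) (sv_act act y mu (sv_act act x lam e))
                  = sv_act act (sv_bracket x lam y) (lam + mu) e)"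

definition ext_of_form :: "complex \<Rightarrow> complex \<Rightarrow> complex \<Rightarrow> complex poly \<Rightarrow> complex poly \<Rightarrow> complex poly
     \<Rightarrow> (sv_gen \<Rightarrow> complex \<Rightarrow> E_elem \<Rightarrow> E_elem) \<Rightarrow> bool" where
  "ext_of_form \<alpha> \<Delta> \<gamma> f g h act \<longleftrightarrow>
     conformal_module \<gamma> act \<and>
     (\<forall>a lam z. act a lam (z, 0) = (0, 0)) \<and>
     (\<forall>lam. act L lam (0, 1) = (poly f lam, [:\<alpha> + \<Delta> * lam, 1:]) \<and>
            act M lam (0, 1) = (poly g lam, 0) \<and>
            act Y lam (0, 1) = (poly h lam, 0))"

text \<open>Equivalence of two extensions (module structures act, act' on E):
  a module homomorphism E -> E' that is the identity on C c_gamma and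
  induces the identity on V(alpha, Delta).\<close>
definition ext_equiv :: "complex \<Rightarrow> (sv_gen \<Rightarrow> complex \<Rightarrow> E_elem \<Rightarrow> E_elem)
     \<Rightarrow> (sv_gen \<Rightarrow> complex \<Rightarrow> E_elem \<Rightarrow> E_elem) \<Rightarrow> bool" where
  "ext_equiv \<gamma> act act' \<longleftrightarrow> (\<exists>\<phi>.
     (\<forall>e e'. \<phi> (addE e e') = addE (\<phi> e) (\<phi> e')) \<and>
     (\<forall>s e. \<phi> (smulE s e) = smulE s (\<phi> e)) \<and>
     (\<forall>e. \<phi> (delE \<gamma> e) = delE \<gamma> (\<phi> e)) \<and>
     (\<forall>a lam e. \<phi> (act a lam e) = act' a lam (\<phi> e)) \<and>
     (\<forall>z. \<phi> (z, 0) = (z, 0)) \<and>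
     (\<forall>e. snd (\<phi> e) = snd e))"

definition trivial_ext :: "complex \<Rightarrow> complex \<Rightarrow> complex
     \<Rightarrow> (sv_gen \<Rightarrow> complex \<Rightarrow> E_elem \<Rightarrow> E_elem) \<Rightarrow> bool" where
  "trivial_ext \<alpha> \<Delta> \<gamma> act \<longleftrightarrow>
     (\<exists>act0. ext_of_form \<alpha> \<Delta> \<gamma> 0 0 0 act0 \<and> ext_equiv \<gamma> act act0)"

definition is_cocycle :: "complex \<Rightarrow> complex \<Rightarrow> complex \<Rightarrow> complex poly \<Rightarrow> complex poly \<Rightarrow> complex poly \<Rightarrow> bool" where
  "is_cocycle \<alpha> \<Delta> \<gamma> f g h \<longleftrightarrow> (\<exists>act. ext_of_form \<alpha> \<Delta> \<gamma> f g h act)"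

definition is_coboundary :: "complex \<Rightarrow> complex \<Rightarrow> complex \<Rightarrow> complex poly \<Rightarrow> complex poly \<Rightarrow> complex poly \<Rightarrow> bool" where
  "is_coboundary \<alpha> \<Delta> \<gamma> f g h \<longleftrightarrow>
     (\<exists>act. ext_of_form \<alpha> \<Delta> \<gamma> f g h act \<and> trivial_ext \<alpha> \<Delta> \<gamma> act)"

definition nontrivial_ext :: "complex \<Rightarrow> complex \<Rightarrow> complex \<Rightarrow> complex poly \<Rightarrow> complex poly \<Rightarrow> complex poly \<Rightarrow> bool" where
  "nontrivial_ext \<alpha> \<Delta> \<gamma> f g h \<longleftrightarrow>
     (\<exists>act. ext_of_form \<alpha> \<Delta> \<gamma> f g h act \<and> \<not> trivial_ext \<alpha> \<Delta> \<gamma> act)"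

definition equiv_forms :: "complex \<Rightarrow> complex \<Rightarrow> complex
     \<Rightarrow> complex poly \<times> complex poly \<times> complex poly
     \<Rightarrow> complex poly \<times> complex poly \<times> complex poly \<Rightarrow> bool" where
  "equiv_forms \<alpha> \<Delta> \<gamma> u u' \<longleftrightarrow>
     (\<exists>act act'. ext_of_form \<alpha> \<Delta> \<gamma> (fst u) (fst (snd u)) (snd (snd u)) act \<and>
                 ext_of_form \<alpha> \<Delta> \<gamma> (fst u') (fst (snd u')) (snd (snd u')) act' \<and>
                 ext_equiv \<gamma> act act')"

text \<open>Ext = cocycles / coboundaries is one-dimensional: there is a cocycle w
  that is not a coboundary such that every cocycle is a scalar multiple of w
  modulo coboundaries.\<close>
definition ext_dim_one :: "complex \<Rightarrow> complex \<Rightarrow> complex \<Rightarrow> bool" where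
  "ext_dim_one \<alpha> \<Delta> \<gamma> \<longleftrightarrow>
     (\<exists>f0 g0 h0. is_cocycle \<alpha> \<Delta> \<gamma> f0 g0 h0 \<and> \<not> is_coboundary \<alpha> \<Delta> \<gamma> f0 g0 h0 \<and>
        (\<forall>f g h. is_cocycle \<alpha> \<Delta> \<gamma> f g h \<longrightarrow>
           (\<exists>s. is_coboundary \<alpha> \<Delta> \<gamma> (f - smult s f0) (g - smult s g0) (h - smult s h0))))"

end

theory Submission
  imports Defs
begin

text \<open>Sesquilinearity and \<open>[\<partial>, a\<^sub>\<lambda>] = -\<lambda> a\<^sub>\<lambda>\<close> force the whole action on \<open>E\<close> to be
  determined by \<open>f, g, h\<close>, so an extension of the given form exists iff the bracket identities hold
  on \<open>v\<close>: \<open>g = 0\<close> and \<open>f, h\<close> satisfy two functional equations. An equivalence must be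
  \<open>z c + p(\<partial>) v \<mapsto> (z + k p(\<gamma>)) c + p(\<partial>) v\<close>, which changes \<open>f\<close> by \<open>k (\<alpha> + \<gamma> + \<Delta> \<lambda>)\<close>;
  these multiples are the coboundaries. Putting \<open>\<mu> = 0\<close> shows that every cocycle is a coboundary
  unless \<open>\<alpha> + \<gamma> = 0\<close>. Then putting \<open>\<mu> = t \<lambda>\<close> and comparing coefficients of \<open>\<lambda>\<^sup>n\<^sup>+\<^sup>1\<close>
  shows that \<open>f\<close> can only contain \<open>\<lambda>\<close> (a coboundary), \<open>\<lambda>\<^sup>2\<close> if \<open>\<Delta> = 1\<close> and \<open>\<lambda>\<^sup>3\<close> if \<open>\<Delta> = 2\<close>,
  while \<open>h\<close> is a constant that vanishes unless \<open>\<Delta> = -1/2\<close>.\<close>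

section \<open>The module structure determined by a cocycle\<close>

definition gen_cocycle :: "complex poly \<Rightarrow> complex poly \<Rightarrow> complex poly \<Rightarrow> sv_gen \<Rightarrow> complex poly" where
  "gen_cocycle f g h a = (case a of L \<Rightarrow> f | M \<Rightarrow> g | Y \<Rightarrow> h)"

text \<open>Sesquilinearity forces \<open>a\<^sub>\<lambda> (z c + p(\<partial>) v) = p(\<partial> + \<lambda>) a\<^sub>\<lambda> v\<close>, and \<open>\<partial>\<close> acts on \<open>c\<close>
  by \<open>\<gamma>\<close>.\<close>
definition ext_action :: "complex \<Rightarrow> complex \<Rightarrow> complex \<Rightarrow> complex poly \<Rightarrow> complex poly \<Rightarrow> complex poly
    \<Rightarrow> sv_gen \<Rightarrow> complex \<Rightarrow> E_elem \<Rightarrow> E_elem" where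
  "ext_action \<alpha> \<Delta> \<gamma> f g h a lam e =
     (poly (snd e) (\<gamma> + lam) * poly (gen_cocycle f g h a) lam,
      pcompose (snd e) [:lam, 1:] * (if a = L then [:\<alpha> + \<Delta> * lam, 1:] else 0))"

lemma ext_action_addE:
  "ext_action \<alpha> \<Delta> \<gamma> f g h a lam (addE e e') =
     addE (ext_action \<alpha> \<Delta> \<gamma> f g h a lam e) (ext_action \<alpha> \<Delta> \<gamma> f g h a lam e')"
  by (simp add: ext_action_def addE_def pcompose_add algebra_simps)

lemma ext_action_smulE:
  "ext_action \<alpha> \<Delta> \<gamma> f g h a lam (smulE s e) = smulE s (ext_action \<alpha> \<Delta> \<gamma> f g h a lam e)"
  by (simp add: ext_action_def smulE_def pcompose_smult)

lemma ext_action_delE: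
  "ext_action \<alpha> \<Delta> \<gamma> f g h a lam (delE \<gamma> e) =
     addE (delE \<gamma> (ext_action \<alpha> \<Delta> \<gamma> f g h a lam e)) (smulE lam (ext_action \<alpha> \<Delta> \<gamma> f g h a lam e))"
  by (cases a) (simp_all add: ext_action_def gen_cocycle_def delE_def addE_def smulE_def
      pcompose_pCons pcompose_mult smult_add_right smult_add_left[symmetric] algebra_simps)

lemma sv_act_ext_action_delE:
  "subE (delE \<gamma> (sv_act (ext_action \<alpha> \<Delta> \<gamma> f g h) x lam e)) (sv_act (ext_action \<alpha> \<Delta> \<gamma> f g h) x lam (delE \<gamma> e))
     = smulE (- lam) (sv_act (ext_action \<alpha> \<Delta> \<gamma> f g h) x lam e)"
  unfolding sv_act_def ext_action_delE
  by (simp add: subE_def delE_def addE_def smulE_def algebra_simps smult_add_right)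

text \<open>The \<open>c\<close>-components of \<open>[L\<^sub>\<lambda>, L\<^sub>\<mu>] v\<close> and \<open>[L\<^sub>\<lambda>, Y\<^sub>\<mu>] v\<close>; the component of
  \<open>[Y\<^sub>\<lambda>, Y\<^sub>\<mu>] v = (\<lambda> - \<mu>) M\<^sub>\<lambda>\<^sub>+\<^sub>\<mu> v\<close> forces \<open>g = 0\<close>.\<close>
definition cocycle_cond :: "complex \<Rightarrow> complex \<Rightarrow> complex \<Rightarrow> complex poly \<Rightarrow> complex poly \<Rightarrow> complex poly \<Rightarrow> bool" where
  "cocycle_cond \<alpha> \<Delta> \<gamma> f g h \<longleftrightarrow> g = 0 \<and>
     (\<forall>lam mu. (\<alpha>+\<gamma>+lam+\<Delta>*mu) * poly f lam - (\<alpha>+\<gamma>+mu+\<Delta>*lam) * poly f mu = (lam - mu) * poly f (lam+mu)) \<and>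
     (\<forall>lam mu. -(\<alpha>+\<gamma>+mu+\<Delta>*lam) * poly h mu = (lam/2 - mu) * poly h (lam+mu))"

lemma cocycle_condD:
  assumes "cocycle_cond \<alpha> \<Delta> \<gamma> f g h"
  shows "g = 0"
    and "(\<alpha>+\<gamma>+lam+\<Delta>*mu) * poly f lam - (\<alpha>+\<gamma>+mu+\<Delta>*lam) * poly f mu = (lam - mu) * poly f (lam+mu)"
    and "-(\<alpha>+\<gamma>+mu+\<Delta>*lam) * poly h mu = (lam/2 - mu) * poly h (lam+mu)"
  using assms unfolding cocycle_cond_def by blast+

text \<open>After expansion, the \<open>c\<close>-component of the bracket identity is the sum of the three
  cocycle equations weighted by \<open>xL yL p\<close>, \<open>xL yY p\<close> and \<open>- xY yL p\<close>.\<close>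
lemma bracket_c_component_identity:
  fixes xL xY yL yY p f_lam f_mu f_sum h_lam h_mu h_sum lam mu \<alpha> \<gamma> \<Delta> :: complex
  assumes LL: "(\<alpha>+\<gamma>+lam+\<Delta>*mu)*f_lam - (\<alpha>+\<gamma>+mu+\<Delta>*lam)*f_mu = (lam-mu)*f_sum"
    and LY: "-(\<alpha>+\<gamma>+mu+\<Delta>*lam)*h_mu = (lam/2-mu)*h_sum"
    and YL: "-(\<alpha>+\<gamma>+lam+\<Delta>*mu)*h_lam = (mu/2-lam)*h_sum"
  shows "xL * (yL * ((\<alpha> + \<Delta> * mu) * p + (\<gamma> + lam) * p) * f_lam) + xY * (yL * ((\<alpha> + \<Delta> * mu) * p + (\<gamma> + lam) * p) * h_lam)
     - (yL * (xL * ((\<alpha> + \<Delta> * lam) * p + (\<gamma> + mu) * p) * f_mu) + yY * (xL * ((\<alpha> + \<Delta> * lam) * p + (\<gamma> + mu) * p) * h_mu))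
   = xL * (2 * lam * yL + (- lam - mu) * yL) * (p * f_sum)
     + (xL * (3 * lam * yY / 2 + (- lam - mu) * yY) + xY * (3 * lam * yL / 2 + (- lam - mu) * yL / 2)) * (p * h_sum)"
proof -
  have "xL * (yL * ((\<alpha> + \<Delta> * mu) * p + (\<gamma> + lam) * p) * f_lam) + xY * (yL * ((\<alpha> + \<Delta> * mu) * p + (\<gamma> + lam) * p) * h_lam)
     - (yL * (xL * ((\<alpha> + \<Delta> * lam) * p + (\<gamma> + mu) * p) * f_mu) + yY * (xL * ((\<alpha> + \<Delta> * lam) * p + (\<gamma> + mu) * p) * h_mu))
   - (xL * (2 * lam * yL + (- lam - mu) * yL) * (p * f_sum)
     + (xL * (3 * lam * yY / 2 + (- lam - mu) * yY) + xY * (3 * lam * yL / 2 + (- lam - mu) * yL / 2)) * (p * h_sum))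
   = xL*yL*p*(((\<alpha>+\<gamma>+lam+\<Delta>*mu)*f_lam - (\<alpha>+\<gamma>+mu+\<Delta>*lam)*f_mu) - (lam-mu)*f_sum)
     + xL*yY*p*((-(\<alpha>+\<gamma>+mu+\<Delta>*lam)*h_mu) - (lam/2-mu)*h_sum)
     - xY*yL*p*((-(\<alpha>+\<gamma>+lam+\<Delta>*mu)*h_lam) - (mu/2-lam)*h_sum)"
    by (simp add: field_simps)
  also have "\<dots> = 0" using LL LY YL by simp
  finally show ?thesis by simp
qed

lemma ext_action_bracket_fst:
  assumes "cocycle_cond \<alpha> \<Delta> \<gamma> f 0 h"
  shows "fst (subE (sv_act (ext_action \<alpha> \<Delta> \<gamma> f 0 h) x lam (sv_act (ext_action \<alpha> \<Delta> \<gamma> f 0 h) y mu e))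
               (sv_act (ext_action \<alpha> \<Delta> \<gamma> f 0 h) y mu (sv_act (ext_action \<alpha> \<Delta> \<gamma> f 0 h) x lam e)))
        = fst (sv_act (ext_action \<alpha> \<Delta> \<gamma> f 0 h) (sv_bracket x lam y) (lam + mu) e)"
proof -
  have YL: "-(\<alpha>+\<gamma>+lam+\<Delta>*mu) * poly h lam = (mu/2 - lam) * poly h (lam+mu)"
    using cocycle_condD(3)[OF assms, where lam=mu and mu=lam] by (simp add: add.commute)
  have shifts: "lam + - (lam + mu) = - mu" "mu + (\<gamma> + lam) = \<gamma> + (lam+mu)" "lam + (\<gamma> + mu) = \<gamma> + (lam+mu)"
    by (simp_all add: algebra_simps)
  show ?thesis
    by (simp add: ext_action_def sv_act_def subE_def addE_def smulE_def sv_bracket_def sv_gens_def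
        gen_cocycle_def poly_pcompose shifts)
      (rule bracket_c_component_identity[OF cocycle_condD(2,3)[OF assms] YL])
qed

lemma ext_action_bracket_snd:
  "snd (subE (sv_act (ext_action \<alpha> \<Delta> \<gamma> f 0 h) x lam (sv_act (ext_action \<alpha> \<Delta> \<gamma> f 0 h) y mu e))
             (sv_act (ext_action \<alpha> \<Delta> \<gamma> f 0 h) y mu (sv_act (ext_action \<alpha> \<Delta> \<gamma> f 0 h) x lam e)))
   = snd (sv_act (ext_action \<alpha> \<Delta> \<gamma> f 0 h) (sv_bracket x lam y) (lam + mu) e)"
proof -
  have shifts: "lam + - (lam + mu) = - mu" "\<And>t. lam + (mu + t) = lam + mu + t" "\<And>t. mu + (lam + t) = lam + mu + t"
    by (simp_all add: algebra_simps)
  show ?thesis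
    by (intro poly_eq_poly_eq_iff[THEN iffD1] ext)
      (simp add: ext_action_def sv_act_def subE_def addE_def smulE_def sv_bracket_def sv_gens_def
        gen_cocycle_def poly_pcompose shifts, simp add: algebra_simps)
qed

lemma conformal_module_ext_action:
  assumes "cocycle_cond \<alpha> \<Delta> \<gamma> f g h"
  shows "conformal_module \<gamma> (ext_action \<alpha> \<Delta> \<gamma> f g h)"
proof -
  have "g = 0" using cocycle_condD(1)[OF assms] .
  then show ?thesis
    unfolding conformal_module_def
    using assms ext_action_bracket_fst ext_action_bracket_snd
    by (auto simp: ext_action_addE ext_action_smulE sv_act_ext_action_delE prod_eq_iff)
qed

lemma ext_of_form_ext_action:
  assumes "cocycle_cond \<alpha> \<Delta> \<gamma> f g h"
  shows "ext_of_form \<alpha> \<Delta> \<gamma> f g h (ext_action \<alpha> \<Delta> \<gamma> f g h)"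
  using conformal_module_ext_action[OF assms]
  by (simp add: ext_of_form_def ext_action_def gen_cocycle_def pcompose_1)

definition sv_gen_elem :: "sv_gen \<Rightarrow> sv_elem" where
  "sv_gen_elem a = (\<lambda>c. if c = a then 1 else 0)"

lemma sv_act_sv_gen_elem: "sv_act act (sv_gen_elem a) lam e = act a lam e"
  by (cases a) (simp_all add: sv_act_def sv_gen_elem_def addE_def smulE_def)

lemma conformal_module_act_delE:
  assumes "conformal_module \<gamma> act"
  shows "act a lam (delE \<gamma> e) = addE (delE \<gamma> (act a lam e)) (smulE lam (act a lam e))"
proof -
  from assms have "subE (delE \<gamma> (sv_act act (sv_gen_elem a) lam e)) (sv_act act (sv_gen_elem a) lam (delE \<gamma> e))
                  = smulE (- lam) (sv_act act (sv_gen_elem a) lam e)"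
    unfolding conformal_module_def by blast
  then show ?thesis
    by (simp add: sv_act_sv_gen_elem subE_def delE_def addE_def smulE_def prod_eq_iff algebra_simps)
qed

lemma conformal_module_act_bracket:
  assumes "conformal_module \<gamma> act"
  shows "subE (act a lam (act b mu e)) (act b mu (act a lam e))
           = sv_act act (sv_bracket (sv_gen_elem a) lam (sv_gen_elem b)) (lam + mu) e"
  using assms unfolding conformal_module_def by (metis sv_act_sv_gen_elem)

lemma ext_of_form_imp_eq_ext_action:
  assumes "ext_of_form \<alpha> \<Delta> \<gamma> f g h act"
  shows "act = ext_action \<alpha> \<Delta> \<gamma> f g h"
proof -
  from assms have cm: "conformal_module \<gamma> act"
    and on_c: "\<And>a lam z. act a lam (z, 0) = (0, 0)"
    and on_v: "\<And>a lam. act a lam (0, 1) = ext_action \<alpha> \<Delta> \<gamma> f g h a lam (0, 1)"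
    unfolding ext_of_form_def
    by (auto simp: ext_action_def gen_cocycle_def pcompose_1 split: sv_gen.split)
  from cm have add: "\<And>a lam e e'. act a lam (addE e e') = addE (act a lam e) (act a lam e')"
    and smul: "\<And>a lam s e. act a lam (smulE s e) = smulE s (act a lam e)"
    unfolding conformal_module_def by auto
  have "\<forall>z. act a lam (z, p) = ext_action \<alpha> \<Delta> \<gamma> f g h a lam (z, p)" for a lam p
  proof (induction p)
    case 0
    show ?case by (simp add: on_c ext_action_def)
  next
    case (pCons s q)
    have split: "(z, pCons s q) = addE (z, 0) (addE (smulE s (0, 1)) (delE \<gamma> (0, q)))" for z
      by (simp add: addE_def smulE_def delE_def)
    show ?case
      by (simp only: split add smul conformal_module_act_delE[OF cm] ext_action_addE ext_action_smulE
          ext_action_delE on_v pCons.IH[rule_format] on_c) (simp add: ext_action_def)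
  qed
  then show ?thesis
    by (intro ext) (metis prod.collapse)
qed

lemma cocycle_cond_if_conformal_module:
  assumes cm: "conformal_module \<gamma> (ext_action \<alpha> \<Delta> \<gamma> f g h)"
  shows "cocycle_cond \<alpha> \<Delta> \<gamma> f g h"
proof -
  let ?act = "ext_action \<alpha> \<Delta> \<gamma> f g h"
  have shift: "\<And>lam mu::complex. lam + - (lam + mu) = - mu" by simp
  have c_component: "fst (subE (?act a lam (?act b mu (0, 1))) (?act b mu (?act a lam (0, 1))))
      = fst (sv_act ?act (sv_bracket (sv_gen_elem a) lam (sv_gen_elem b)) (lam + mu) (0, 1))" for a b lam mu
    by (simp only: conformal_module_act_bracket[OF cm])
  have YY: "(lam - mu) * poly g (lam + mu) = 0" for lam mu
    using c_component[of Y lam Y mu]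
    by (simp add: ext_action_def sv_act_def subE_def addE_def smulE_def sv_bracket_def sv_gens_def
        gen_cocycle_def sv_gen_elem_def poly_pcompose shift)
  have LL: "(\<alpha>+\<gamma>+lam+\<Delta>*mu) * poly f lam - (\<alpha>+\<gamma>+mu+\<Delta>*lam) * poly f mu = (lam - mu) * poly f (lam+mu)"
    for lam mu
    using c_component[of L lam L mu]
    by (simp add: ext_action_def sv_act_def subE_def addE_def smulE_def sv_bracket_def sv_gens_def
        gen_cocycle_def sv_gen_elem_def poly_pcompose shift) (simp add: ac_simps)
  have LY: "-(\<alpha>+\<gamma>+mu+\<Delta>*lam) * poly h mu = (lam/2 - mu) * poly h (lam+mu)" for lam mu
    using c_component[of L lam Y mu]
    by (simp add: ext_action_def sv_act_def subE_def addE_def smulE_def sv_bracket_def sv_gens_def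
        gen_cocycle_def sv_gen_elem_def poly_pcompose shift) (simp add: algebra_simps)
  have "poly g t = 0" for t
    using YY[of "t/2 + 1/2" "t/2 - 1/2"] by simp
  then have "g = 0" using poly_all_0_iff_0 by blast
  then show ?thesis unfolding cocycle_cond_def using LL LY by blast
qed

lemma ext_of_form_iff:
  "ext_of_form \<alpha> \<Delta> \<gamma> f g h act \<longleftrightarrow> act = ext_action \<alpha> \<Delta> \<gamma> f g h \<and> cocycle_cond \<alpha> \<Delta> \<gamma> f g h"
  by (metis ext_of_form_imp_eq_ext_action ext_of_form_def cocycle_cond_if_conformal_module
      ext_of_form_ext_action)

section \<open>Coboundaries\<close>

definition coboundary_cond :: "complex \<Rightarrow> complex \<Rightarrow> complex \<Rightarrow> complex poly \<Rightarrow> complex poly \<Rightarrow> complex poly \<Rightarrow> bool" where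
  "coboundary_cond \<alpha> \<Delta> \<gamma> f g h \<longleftrightarrow> g = 0 \<and> h = 0 \<and> (\<exists>k. f = smult k [:\<alpha>+\<gamma>, \<Delta>:])"

lemma coboundary_cond_add_iff:
  "coboundary_cond \<alpha> \<Delta> \<gamma> (f + smult k [:\<alpha>+\<gamma>, \<Delta>:]) g h \<longleftrightarrow> coboundary_cond \<alpha> \<Delta> \<gamma> f g h"
  unfolding coboundary_cond_def
  by (metis add_diff_cancel_right' diff_conv_add_uminus smult_add_left smult_minus_left)

lemma cocycle_cond_if_coboundary_cond:
  assumes "coboundary_cond \<alpha> \<Delta> \<gamma> f g h"
  shows "cocycle_cond \<alpha> \<Delta> \<gamma> f g h"
  using assms unfolding coboundary_cond_def cocycle_cond_def by (auto simp: algebra_simps)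

lemma ext_equiv_ext_action_shift:
  assumes "f' = f + smult k [:\<alpha>+\<gamma>, \<Delta>:]"
  shows "ext_equiv \<gamma> (ext_action \<alpha> \<Delta> \<gamma> f g h) (ext_action \<alpha> \<Delta> \<gamma> f' g h)"
  unfolding ext_equiv_def
proof (intro exI[of _ "\<lambda>e. (fst e + k * poly (snd e) \<gamma>, snd e)"] conjI allI)
  fix a lam and e :: E_elem
  show "(fst (ext_action \<alpha> \<Delta> \<gamma> f g h a lam e) + k * poly (snd (ext_action \<alpha> \<Delta> \<gamma> f g h a lam e)) \<gamma>,
        snd (ext_action \<alpha> \<Delta> \<gamma> f g h a lam e)) =
       ext_action \<alpha> \<Delta> \<gamma> f' g h a lam (fst e + k * poly (snd e) \<gamma>, snd e)"
    using assms by (cases a) (simp_all add: ext_action_def gen_cocycle_def poly_pcompose algebra_simps)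
qed (simp_all add: addE_def smulE_def delE_def algebra_simps)

lemma coboundary_cond_if_ext_equiv_trivial:
  assumes "ext_equiv \<gamma> (ext_action \<alpha> \<Delta> \<gamma> f g h) (ext_action \<alpha> \<Delta> \<gamma> 0 0 0)"
  shows "coboundary_cond \<alpha> \<Delta> \<gamma> f g h"
proof -
  from assms obtain \<phi> where add: "\<And>e e'. \<phi> (addE e e') = addE (\<phi> e) (\<phi> e')"
    and smul: "\<And>s e. \<phi> (smulE s e) = smulE s (\<phi> e)"
    and del: "\<And>e. \<phi> (delE \<gamma> e) = delE \<gamma> (\<phi> e)"
    and act: "\<And>a lam e. \<phi> (ext_action \<alpha> \<Delta> \<gamma> f g h a lam e) = ext_action \<alpha> \<Delta> \<gamma> 0 0 0 a lam (\<phi> e)"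
    and on_c: "\<And>z. \<phi> (z, 0) = (z, 0)"
    and on_v: "\<And>e. snd (\<phi> e) = snd e"
    unfolding ext_equiv_def by blast
  define k where "k = fst (\<phi> (0, 1))"
  have \<phi>_v: "\<phi> (0, 1) = (k, 1)"
    using on_v[of "(0, 1)"] unfolding k_def by (metis prod.collapse snd_conv)
  have \<phi>_linear: "\<phi> (w, [:c, 1:]) = (w + (c + \<gamma>) * k, [:c, 1:])" for w c
  proof -
    have "(w, [:c, 1:]) = addE (w, 0) (addE (smulE c (0, 1)) (delE \<gamma> (0, 1)))"
      by (simp add: addE_def smulE_def delE_def)
    then have "\<phi> (w, [:c, 1:]) = addE (\<phi> (w, 0)) (addE (smulE c (\<phi> (0, 1))) (delE \<gamma> (\<phi> (0, 1))))"
      by (simp only: add smul del)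
    then show ?thesis by (simp add: on_c \<phi>_v addE_def smulE_def delE_def algebra_simps)
  qed
  have act_v: "\<phi> (ext_action \<alpha> \<Delta> \<gamma> f g h a lam (0, 1)) = ext_action \<alpha> \<Delta> \<gamma> 0 0 0 a lam (k, 1)" for a lam
    using act \<phi>_v by simp
  have "poly f lam = poly (smult (-k) [:\<alpha>+\<gamma>, \<Delta>:]) lam" "poly g lam = 0" "poly h lam = 0" for lam
    using act_v[of L lam] act_v[of M lam] act_v[of Y lam]
    by (auto simp: ext_action_def gen_cocycle_def pcompose_1 \<phi>_linear on_c algebra_simps add_eq_0_iff)
  then show ?thesis
    unfolding coboundary_cond_def by (metis poly_eq_poly_eq_iff poly_0 ext)
qed

lemma trivial_ext_ext_action_iff:
  "trivial_ext \<alpha> \<Delta> \<gamma> (ext_action \<alpha> \<Delta> \<gamma> f g h) \<longleftrightarrow> coboundary_cond \<alpha> \<Delta> \<gamma> f g h"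
proof
  assume "trivial_ext \<alpha> \<Delta> \<gamma> (ext_action \<alpha> \<Delta> \<gamma> f g h)"
  then obtain act0 where "act0 = ext_action \<alpha> \<Delta> \<gamma> 0 0 0" "ext_equiv \<gamma> (ext_action \<alpha> \<Delta> \<gamma> f g h) act0"
    unfolding trivial_ext_def ext_of_form_iff by blast
  then show "coboundary_cond \<alpha> \<Delta> \<gamma> f g h"
    by (simp add: coboundary_cond_if_ext_equiv_trivial)
next
  assume "coboundary_cond \<alpha> \<Delta> \<gamma> f g h"
  then obtain k where "g = 0" "h = 0" "f = smult k [:\<alpha>+\<gamma>, \<Delta>:]"
    unfolding coboundary_cond_def by blast
  moreover have "0 = smult k [:\<alpha>+\<gamma>, \<Delta>:] + smult (-k) [:\<alpha>+\<gamma>, \<Delta>:]"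
    by (simp flip: smult_add_left)
  ultimately have "ext_equiv \<gamma> (ext_action \<alpha> \<Delta> \<gamma> f g h) (ext_action \<alpha> \<Delta> \<gamma> 0 0 0)"
    using ext_equiv_ext_action_shift by blast
  moreover have "cocycle_cond \<alpha> \<Delta> \<gamma> 0 0 0"
    by (simp add: cocycle_cond_def)
  ultimately show "trivial_ext \<alpha> \<Delta> \<gamma> (ext_action \<alpha> \<Delta> \<gamma> f g h)"
    unfolding trivial_ext_def ext_of_form_iff by blast
qed

lemma is_cocycle_iff: "is_cocycle \<alpha> \<Delta> \<gamma> f g h \<longleftrightarrow> cocycle_cond \<alpha> \<Delta> \<gamma> f g h"
  unfolding is_cocycle_def ext_of_form_iff by blast

lemma is_coboundary_iff: "is_coboundary \<alpha> \<Delta> \<gamma> f g h \<longleftrightarrow> coboundary_cond \<alpha> \<Delta> \<gamma> f g h"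
  unfolding is_coboundary_def ext_of_form_iff
  using cocycle_cond_if_coboundary_cond by (auto simp: trivial_ext_ext_action_iff)

lemma nontrivial_ext_iff:
  "nontrivial_ext \<alpha> \<Delta> \<gamma> f g h \<longleftrightarrow> cocycle_cond \<alpha> \<Delta> \<gamma> f g h \<and> \<not> coboundary_cond \<alpha> \<Delta> \<gamma> f g h"
  unfolding nontrivial_ext_def ext_of_form_iff by (auto simp: trivial_ext_ext_action_iff)

lemma equiv_formsI:
  assumes "cocycle_cond \<alpha> \<Delta> \<gamma> f g h" "cocycle_cond \<alpha> \<Delta> \<gamma> f' g h"
    and "f' = f + smult k [:\<alpha>+\<gamma>, \<Delta>:]"
  shows "equiv_forms \<alpha> \<Delta> \<gamma> (f, g, h) (f', g, h)"
  unfolding equiv_forms_def prod.sel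
  using ext_of_form_ext_action[OF assms(1)] ext_of_form_ext_action[OF assms(2)]
    ext_equiv_ext_action_shift[OF assms(3)] by blast

section \<open>Solving the cocycle equations\<close>

lemma coboundary_cond_if_alpha_gamma_nonzero:
  assumes c: "cocycle_cond \<alpha> \<Delta> \<gamma> f g h" and A: "\<alpha> + \<gamma> \<noteq> 0"
  shows "coboundary_cond \<alpha> \<Delta> \<gamma> f g h"
proof -
  have "(\<alpha>+\<gamma>) * poly f t = (\<alpha>+\<gamma>+\<Delta>*t) * poly f 0" for t
    using cocycle_condD(2)[OF c, where lam=t and mu=0] by (simp add: algebra_simps)
  moreover have "(\<alpha>+\<gamma>) * poly (smult (poly f 0 / (\<alpha>+\<gamma>)) [:\<alpha>+\<gamma>, \<Delta>:]) t = (\<alpha>+\<gamma>+\<Delta>*t) * poly f 0" for t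
    unfolding poly_smult mult.assoc[symmetric] times_divide_eq_right nonzero_mult_div_cancel_left[OF A]
    by (simp add: algebra_simps)
  ultimately have "poly f t = poly (smult (poly f 0 / (\<alpha>+\<gamma>)) [:\<alpha>+\<gamma>, \<Delta>:]) t" for t
    using A mult_left_cancel by metis
  then have "f = smult (poly f 0 / (\<alpha>+\<gamma>)) [:\<alpha>+\<gamma>, \<Delta>:]"
    using poly_eq_poly_eq_iff by blast
  moreover have "(\<alpha>+\<gamma>) * poly h t = 0" for t
    using cocycle_condD(3)[OF c, where lam=0 and mu=t] by (simp add: algebra_simps neg_eq_iff_add_eq_0)
  then have "h = 0"
    using A poly_all_0_iff_0 by auto
  ultimately show ?thesis
    unfolding coboundary_cond_def using cocycle_condD(1)[OF c] by blast
qed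

lemma poly_identity_if_coeff_nonzero:
  fixes f :: "complex poly"
  assumes Hf: "\<And>lam mu. (lam + \<Delta>*mu) * poly f lam - (mu + \<Delta>*lam) * poly f mu = (lam-mu) * poly f (lam+mu)"
    and n: "coeff f n \<noteq> 0"
  shows "(1 + \<Delta>*t) - (t + \<Delta>) * t^n - (1 - t) * (1 + t)^n = 0"
proof -
  define Q where "Q = [:0, 1+\<Delta>*t:] * f - [:0, t+\<Delta>:] * pcompose f [:0, t:] - [:0, 1-t:] * pcompose f [:0, 1+t:]"
  have "poly Q s = 0" for s
    using Hf[of s "t*s"] unfolding Q_def by (simp add: poly_pcompose algebra_simps)
  then have "coeff Q (Suc n) = 0"
    using poly_all_0_iff_0 by (metis coeff_0)
  then have "coeff f n * ((1 + \<Delta>*t) - (t + \<Delta>) * t^n - (1 - t) * (1 + t)^n) = 0"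
    unfolding Q_def coeff_diff by (simp add: coeff_pcompose_linear algebra_simps)
  then show ?thesis using n by simp
qed

lemma coeff_nonzero_cases:
  fixes f :: "complex poly"
  assumes Hf: "\<And>lam mu. (lam + \<Delta>*mu) * poly f lam - (mu + \<Delta>*lam) * poly f mu = (lam-mu) * poly f (lam+mu)"
    and \<Delta>: "\<Delta> \<noteq> 0" and n: "coeff f n \<noteq> 0"
  shows "n = 1 \<or> (n = 2 \<and> \<Delta> = 1) \<or> (n = 3 \<and> \<Delta> = 2)"
proof -
  have S: "(1 + \<Delta>*t) - (t + \<Delta>) * t^n - (1 - t) * (1 + t)^n = 0" for t
    using poly_identity_if_coeff_nonzero[OF Hf n] .
  consider "n = 0" | "n = 1" | "n = 2" | "n = 3" | "n \<ge> 4" by linarith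
  then show ?thesis
  proof cases
    case 1
    then show ?thesis using S[of 0] \<Delta> by simp
  next
    case 3
    then show ?thesis using S[of "-1"] by (simp add: algebra_simps)
  next
    case 4
    then have "12 - 6 * \<Delta> = 0" using S[of 2] by (simp add: algebra_simps)
    then show ?thesis using 4 by simp
  next
    case 5
    \<comment> \<open>the coefficient of \<open>t\<^sup>2\<close> in the identity is \<open>n - (n choose 2)\<close>\<close>
    define R where "R = [:1, \<Delta>:] - [:\<Delta>, 1:] * monom 1 n - [:1, -1:] * [:1, 1:] ^ n"
    have "poly R t = 0" for t
      unfolding R_def using S[of t] by (simp add: poly_monom algebra_simps)
    then have "coeff R 2 = 0"
      using poly_all_0_iff_0 by (metis coeff_0)
    moreover have "coeff ([:1, 1:] ^ n :: complex poly) 2 = of_nat (n choose 2)"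
      "coeff ([:1, 1:] ^ n :: complex poly) 1 = of_nat n"
      using coeff_linear_poly_power[of _ n "1::complex" 1] 5 by auto
    ultimately have "(of_nat (n choose 2) :: complex) = of_nat n"
      using 5 unfolding R_def by (simp add: coeff_monom numeral_2_eq_2)
    then have "n * (n - 1) div 2 = n"
      by (simp only: of_nat_eq_iff choose_two)
    moreover have "n * (n - 1) \<ge> n * 3"
      using 5 by simp
    ultimately show ?thesis
      using 5 by linarith
  qed simp
qed

definition rep_cocycle_f :: "complex \<Rightarrow> complex \<Rightarrow> complex poly" where
  "rep_cocycle_f \<Delta> s = (if \<Delta> = 1 then monom s 2 else if \<Delta> = 2 then monom s 3 else 0)"

definition rep_cocycle_h :: "complex \<Rightarrow> complex \<Rightarrow> complex poly" where
  "rep_cocycle_h \<Delta> s = (if \<Delta> = -1/2 then [:s:] else 0)"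

text \<open>\<open>- (1/2)\<close> rather than \<open>-1/2\<close>: the left-hand sides must be in simp normal form.\<close>
lemma rep_cocycle_simps:
  "rep_cocycle_f 1 s = monom s 2" "rep_cocycle_h 1 s = 0"
  "rep_cocycle_f 2 s = monom s 3" "rep_cocycle_h 2 s = 0"
  "rep_cocycle_f (- (1/2)) s = 0" "rep_cocycle_h (- (1/2)) s = [:s:]"
  by (simp_all add: rep_cocycle_f_def rep_cocycle_h_def field_simps)

lemma rep_cocycle_smult:
  "rep_cocycle_f \<Delta> s = smult s (rep_cocycle_f \<Delta> 1)" "rep_cocycle_h \<Delta> s = smult s (rep_cocycle_h \<Delta> 1)"
  by (simp_all add: rep_cocycle_f_def rep_cocycle_h_def smult_monom)

lemma cocycle_cond_rep_cocycle:
  assumes "\<alpha> + \<gamma> = 0"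
  shows "cocycle_cond \<alpha> \<Delta> \<gamma> (rep_cocycle_f \<Delta> s) 0 (rep_cocycle_h \<Delta> s)"
proof -
  have \<gamma>: "\<gamma> = -\<alpha>" using assms by (simp add: eq_neg_iff_add_eq_0 add.commute)
  have "\<Delta> \<notin> {1, 2, -1/2} \<Longrightarrow> rep_cocycle_f \<Delta> s = 0 \<and> rep_cocycle_h \<Delta> s = 0"
    by (simp add: rep_cocycle_f_def rep_cocycle_h_def)
  then consider "\<Delta> = 1" | "\<Delta> = 2" | "\<Delta> = -1/2" | "rep_cocycle_f \<Delta> s = 0" "rep_cocycle_h \<Delta> s = 0"
    by blast
  then show ?thesis
    by cases (simp_all add: cocycle_cond_def rep_cocycle_simps \<gamma> poly_monom
        power2_eq_square power3_eq_cube algebra_simps)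
qed

lemma coboundary_cond_rep_cocycle_iff:
  assumes "\<Delta> \<in> {1, 2, -1/2}"
  shows "coboundary_cond \<alpha> \<Delta> \<gamma> (rep_cocycle_f \<Delta> s) 0 (rep_cocycle_h \<Delta> s) \<longleftrightarrow> s = 0"
proof
  assume cob: "coboundary_cond \<alpha> \<Delta> \<gamma> (rep_cocycle_f \<Delta> s) 0 (rep_cocycle_h \<Delta> s)"
  then obtain k where k: "rep_cocycle_f \<Delta> s = smult k [:\<alpha>+\<gamma>, \<Delta>:]"
    unfolding coboundary_cond_def by blast
  from assms consider "\<Delta> = 1" | "\<Delta> = 2" | "\<Delta> = -1/2" by blast
  then show "s = 0"
  proof cases
    case 1
    then show ?thesis
      using arg_cong[OF k, of "\<lambda>p. coeff p 2"] by (simp add: rep_cocycle_simps numeral_2_eq_2)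
  next
    case 2
    then show ?thesis
      using arg_cong[OF k, of "\<lambda>p. coeff p 3"] by (simp add: rep_cocycle_simps numeral_3_eq_3)
  next
    case 3
    then show ?thesis using cob by (simp add: coboundary_cond_def rep_cocycle_simps)
  qed
qed (auto simp: coboundary_cond_def rep_cocycle_f_def rep_cocycle_h_def intro!: exI[of _ 0])

lemma neg_half_neq: "(- (1/2) :: complex) \<noteq> 1" "(- (1/2) :: complex) \<noteq> 2"
  by (simp_all add: field_simps)

lemma cocycle_cond_h_const:
  assumes c: "cocycle_cond \<alpha> \<Delta> \<gamma> f g h" and A: "\<alpha> + \<gamma> = 0" and \<Delta>: "\<Delta> \<noteq> 0"
  shows "h = [:poly h 0:]" and "(1 + 2*\<Delta>) * poly h 0 = 0"
proof -
  have H: "-(mu + \<Delta>*lam) * poly h mu = (lam/2 - mu) * poly h (lam + mu)" for lam mu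
    using cocycle_condD(3)[OF c, where lam=lam and mu=mu] A by (simp add: algebra_simps)
  have h_t: "poly h t = -2*\<Delta> * poly h 0" if "t \<noteq> 0" for t
  proof -
    have "t * poly h t = t * (-2*\<Delta> * poly h 0)"
      using H[where lam=t and mu=0] by (simp add: algebra_simps)
    then show ?thesis using that mult_left_cancel by blast
  qed
  have "(1 + 2*\<Delta>) * poly h 1 = 0"
    using H[where lam=2 and mu=1] by (simp add: algebra_simps neg_eq_iff_add_eq_0)
  then show h0: "(1 + 2*\<Delta>) * poly h 0 = 0"
    using h_t[of 1] \<Delta> by simp
  have "poly h t = poly [:poly h 0:] t" for t
    using h_t[of t] h0 by (cases "t = 0") (simp_all add: algebra_simps neg_eq_iff_add_eq_0)
  then show "h = [:poly h 0:]"
    using poly_eq_poly_eq_iff by blast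
qed

lemma cocycle_cond_decompose:
  assumes c: "cocycle_cond \<alpha> \<Delta> \<gamma> f g h" and A: "\<alpha> + \<gamma> = 0" and \<Delta>: "\<Delta> \<noteq> 0"
  obtains c s where "f = monom c 1 + rep_cocycle_f \<Delta> s" "g = 0" "h = rep_cocycle_h \<Delta> s"
proof -
  have Hf: "(lam + \<Delta>*mu) * poly f lam - (mu + \<Delta>*lam) * poly f mu = (lam-mu) * poly f (lam+mu)" for lam mu
    using cocycle_condD(2)[OF c, where lam=lam and mu=mu] A by (simp add: algebra_simps)
  define s where "s = (if \<Delta> = 1 then coeff f 2 else if \<Delta> = 2 then coeff f 3 else poly h 0)"
  have "f = monom (coeff f 1) 1 + rep_cocycle_f \<Delta> s"
  proof (rule poly_eqI)
    fix n
    show "coeff f n = coeff (monom (coeff f 1) 1 + rep_cocycle_f \<Delta> s) n"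
      using coeff_nonzero_cases[OF Hf \<Delta>, of n]
      by (cases "coeff f n = 0") (auto simp: s_def rep_cocycle_f_def coeff_monom)
  qed
  moreover have "h = rep_cocycle_h \<Delta> s"
  proof (cases "\<Delta> = -1/2")
    case True
    then show ?thesis
      using cocycle_cond_h_const(1)[OF c A \<Delta>] by (simp add: s_def rep_cocycle_simps neg_half_neq)
  next
    case False
    then have "1 + 2*\<Delta> \<noteq> 0"
      by (auto simp: field_simps eq_neg_iff_add_eq_0 add.commute)
    then show ?thesis
      using False cocycle_cond_h_const[OF c A \<Delta>] by (simp add: rep_cocycle_h_def)
  qed
  ultimately show ?thesis
    using that cocycle_condD(1)[OF c] by blast
qed

lemma monom_1_eq_smult:
  fixes c \<Delta> :: complex
  assumes "\<alpha> + \<gamma> = 0" "\<Delta> \<noteq> 0"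
  shows "monom c 1 = smult (c / \<Delta>) [:\<alpha>+\<gamma>, \<Delta>:]"
  using assms by (simp add: monom_Suc monom_0)

lemma coboundary_cond_monom_1_add_iff:
  assumes "\<alpha> + \<gamma> = 0" "\<Delta> \<noteq> 0"
  shows "coboundary_cond \<alpha> \<Delta> \<gamma> (monom c 1 + f) g h \<longleftrightarrow> coboundary_cond \<alpha> \<Delta> \<gamma> f g h"
  unfolding monom_1_eq_smult[OF assms] add.commute[of _ f] coboundary_cond_add_iff ..

lemma coboundary_cond_monom_1:
  assumes "\<alpha> + \<gamma> = 0" "\<Delta> \<noteq> 0"
  shows "coboundary_cond \<alpha> \<Delta> \<gamma> (monom c 1) 0 0"
  using coboundary_cond_monom_1_add_iff[OF assms, of c 0 0 0]
  by (auto simp: coboundary_cond_def)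

lemma nontrivial_ext_rep_cocycle:
  assumes "\<alpha> + \<gamma> = 0" "\<Delta> \<in> {1, 2, -1/2}" "s \<noteq> 0"
  shows "nontrivial_ext \<alpha> \<Delta> \<gamma> (rep_cocycle_f \<Delta> s) 0 (rep_cocycle_h \<Delta> s)"
  unfolding nontrivial_ext_iff coboundary_cond_rep_cocycle_iff[OF assms(2)]
  using cocycle_cond_rep_cocycle[OF assms(1)] assms(3) by blast

lemma nontrivial_ext_equiv_rep_cocycle:
  assumes A: "\<alpha> + \<gamma> = 0" and \<Delta>: "\<Delta> \<in> {1, 2, -1/2}" and nt: "nontrivial_ext \<alpha> \<Delta> \<gamma> f g h"
  shows "\<exists>s. s \<noteq> 0 \<and> equiv_forms \<alpha> \<Delta> \<gamma> (f, g, h) (rep_cocycle_f \<Delta> s, 0, rep_cocycle_h \<Delta> s)"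
proof -
  have \<Delta>0: "\<Delta> \<noteq> 0"
    using \<Delta> by auto
  from nt have c: "cocycle_cond \<alpha> \<Delta> \<gamma> f g h" and ncob: "\<not> coboundary_cond \<alpha> \<Delta> \<gamma> f g h"
    unfolding nontrivial_ext_iff by blast+
  obtain c s where f: "f = monom c 1 + rep_cocycle_f \<Delta> s" and g: "g = 0" and h: "h = rep_cocycle_h \<Delta> s"
    using cocycle_cond_decompose[OF c A \<Delta>0] .
  have "s \<noteq> 0"
    using ncob unfolding f g h coboundary_cond_monom_1_add_iff[OF A \<Delta>0] coboundary_cond_rep_cocycle_iff[OF \<Delta>] .
  moreover have "equiv_forms \<alpha> \<Delta> \<gamma> (f, 0, h) (rep_cocycle_f \<Delta> s, 0, h)"
  proof (rule equiv_formsI)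
    show "cocycle_cond \<alpha> \<Delta> \<gamma> f 0 h"
      using c unfolding g .
    show "cocycle_cond \<alpha> \<Delta> \<gamma> (rep_cocycle_f \<Delta> s) 0 h"
      unfolding h by (rule cocycle_cond_rep_cocycle[OF A])
    show "rep_cocycle_f \<Delta> s = f + smult (- (c / \<Delta>)) [:\<alpha>+\<gamma>, \<Delta>:]"
      unfolding f monom_1_eq_smult[OF A \<Delta>0] by (simp add: smult_minus_left)
  qed
  ultimately show ?thesis
    unfolding g h by blast
qed

lemma nontrivial_ext_exists_iff:
  assumes \<Delta>0: "\<Delta> \<noteq> 0"
  shows "(\<exists>f g h. nontrivial_ext \<alpha> \<Delta> \<gamma> f g h) \<longleftrightarrow> \<alpha> + \<gamma> = 0 \<and> \<Delta> \<in> {1, 2, -1/2}"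
proof
  assume "\<exists>f g h. nontrivial_ext \<alpha> \<Delta> \<gamma> f g h"
  then obtain f g h where c: "cocycle_cond \<alpha> \<Delta> \<gamma> f g h" and ncob: "\<not> coboundary_cond \<alpha> \<Delta> \<gamma> f g h"
    by (auto simp: nontrivial_ext_iff)
  then have A: "\<alpha> + \<gamma> = 0"
    using coboundary_cond_if_alpha_gamma_nonzero by blast
  obtain c s where f: "f = monom c 1 + rep_cocycle_f \<Delta> s" and g: "g = 0" and h: "h = rep_cocycle_h \<Delta> s"
    using cocycle_cond_decompose[OF c A \<Delta>0] .
  have "\<Delta> \<in> {1, 2, -1/2}"
  proof (rule ccontr)
    assume "\<Delta> \<notin> {1, 2, -1/2}"
    then have "f = monom c 1" "h = 0"
      unfolding f h by (simp_all add: rep_cocycle_f_def rep_cocycle_h_def)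
    with ncob show False
      using coboundary_cond_monom_1[OF A \<Delta>0] g by simp
  qed
  with A show "\<alpha> + \<gamma> = 0 \<and> \<Delta> \<in> {1, 2, -1/2}" ..
next
  assume "\<alpha> + \<gamma> = 0 \<and> \<Delta> \<in> {1, 2, -1/2}"
  then show "\<exists>f g h. nontrivial_ext \<alpha> \<Delta> \<gamma> f g h"
    using nontrivial_ext_rep_cocycle[of \<alpha> \<gamma> \<Delta> 1] by auto
qed

lemma ext_dim_one_if:
  assumes A: "\<alpha> + \<gamma> = 0" and \<Delta>: "\<Delta> \<in> {1, 2, -1/2}"
  shows "ext_dim_one \<alpha> \<Delta> \<gamma>"
proof -
  have \<Delta>0: "\<Delta> \<noteq> 0"
    using \<Delta> by auto
  have "\<exists>s. coboundary_cond \<alpha> \<Delta> \<gamma> (f - smult s (rep_cocycle_f \<Delta> 1)) (g - smult s 0) (h - smult s (rep_cocycle_h \<Delta> 1))"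
    if c: "cocycle_cond \<alpha> \<Delta> \<gamma> f g h" for f g h
  proof -
    obtain c s where "f = monom c 1 + rep_cocycle_f \<Delta> s" "g = 0" "h = rep_cocycle_h \<Delta> s"
      using cocycle_cond_decompose[OF c A \<Delta>0] .
    then have "coboundary_cond \<alpha> \<Delta> \<gamma> (f - smult s (rep_cocycle_f \<Delta> 1)) (g - smult s 0) (h - smult s (rep_cocycle_h \<Delta> 1))"
      using coboundary_cond_monom_1[OF A \<Delta>0] by (simp flip: rep_cocycle_smult)
    then show ?thesis ..
  qed
  moreover have "\<not> coboundary_cond \<alpha> \<Delta> \<gamma> (rep_cocycle_f \<Delta> 1) 0 (rep_cocycle_h \<Delta> 1)"
    by (simp add: coboundary_cond_rep_cocycle_iff[OF \<Delta>])
  ultimately show ?thesis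
    unfolding ext_dim_one_def is_cocycle_iff is_coboundary_iff
    using cocycle_cond_rep_cocycle[OF A] by blast
qed

theorem theorem3p2:
  fixes \<alpha> \<gamma> \<Delta> :: complex
  assumes "\<Delta> \<noteq> 0"
  shows "((\<exists>f g h. nontrivial_ext \<alpha> \<Delta> \<gamma> f g h) \<longleftrightarrow> (\<alpha> + \<gamma> = 0 \<and> \<Delta> \<in> {1, 2, -1/2}))
    \<and> (\<alpha> + \<gamma> = 0 \<and> \<Delta> = 1 \<longrightarrow>
         (\<forall>a2. a2 \<noteq> 0 \<longrightarrow> nontrivial_ext \<alpha> \<Delta> \<gamma> (monom a2 2) 0 0) \<and>
         (\<forall>f g h. nontrivial_ext \<alpha> \<Delta> \<gamma> f g h \<longrightarrow>
            (\<exists>a2. a2 \<noteq> 0 \<and> equiv_forms \<alpha> \<Delta> \<gamma> (f, g, h) (monom a2 2, 0, 0))))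
    \<and> (\<alpha> + \<gamma> = 0 \<and> \<Delta> = 2 \<longrightarrow>
         (\<forall>a3. a3 \<noteq> 0 \<longrightarrow> nontrivial_ext \<alpha> \<Delta> \<gamma> (monom a3 3) 0 0) \<and>
         (\<forall>f g h. nontrivial_ext \<alpha> \<Delta> \<gamma> f g h \<longrightarrow>
            (\<exists>a3. a3 \<noteq> 0 \<and> equiv_forms \<alpha> \<Delta> \<gamma> (f, g, h) (monom a3 3, 0, 0))))
    \<and> (\<alpha> + \<gamma> = 0 \<and> \<Delta> = -1/2 \<longrightarrow>
         (\<forall>b0. b0 \<noteq> 0 \<longrightarrow> nontrivial_ext \<alpha> \<Delta> \<gamma> 0 0 [:b0:]) \<and>
         (\<forall>f g h. nontrivial_ext \<alpha> \<Delta> \<gamma> f g h \<longrightarrow>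
            (\<exists>b0. b0 \<noteq> 0 \<and> equiv_forms \<alpha> \<Delta> \<gamma> (f, g, h) (0, 0, [:b0:]))))
    \<and> (\<alpha> + \<gamma> = 0 \<and> \<Delta> \<in> {1, 2, -1/2} \<longrightarrow> ext_dim_one \<alpha> \<Delta> \<gamma>)"
  using nontrivial_ext_exists_iff[OF assms] ext_dim_one_if
    nontrivial_ext_rep_cocycle[of \<alpha> \<gamma> 1] nontrivial_ext_equiv_rep_cocycle[of \<alpha> \<gamma> 1]
    nontrivial_ext_rep_cocycle[of \<alpha> \<gamma> 2] nontrivial_ext_equiv_rep_cocycle[of \<alpha> \<gamma> 2]
    nontrivial_ext_rep_cocycle[of \<alpha> \<gamma> "-1/2"] nontrivial_ext_equiv_rep_cocycle[of \<alpha> \<gamma> "-1/2"]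
  by (auto simp: rep_cocycle_simps)

end
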